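(* Fix a positive integer $k\geq 2$ and real numbers $\alpha,\beta\in(0,1)$ with $\alpha+\beta\geq (k+2)/k$. Let $n$ be a positive integer, sufficiently large in terms of $k,\alpha,\beta$, let $\ell\geq 2$ be an integer with $k^2\ell\leq n/3$, and let $m=\binom{n}{k}$. Then one can find $\lfloor m/\ell\rfloor$ $(k,\ell)$-parpartitions of $[n]$ such that (1) no $k$-element subset of $[n]$ appears in two of these parpartitions, and (2) no two distinct of these parpartitions $P_1,P_2$ are $(\alpha,\beta)$-close.
   Context: A $(k,\ell)$-parpartition (partial partition) of $[n]=\{1,\dots,n\}$ is a family of $\ell$ pairwise disjoint $k$-element subsets of $[n]$ (so $k\ell\leq n$; their union may be a proper subset of $[n]$). Two parpartitions $P_1,P_2$ are $(\alpha,\beta)$-close if there exist sets $A_1\neq B_1$ in $P_1$ and $A_2\neq B_2$ in $P_2$ with $|A_1\cap A_2|>\alpha k$ and $|B_1\cap B_2|>\beta k$. *)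

theory Defs
  imports Main Complex_Main
begin

definition parpartition :: "nat \<Rightarrow> nat \<Rightarrow> nat \<Rightarrow> nat set set \<Rightarrow> bool" where
  "parpartition n k l P \<longleftrightarrow>
     (\<forall>A\<in>P. A \<subseteq> {1..n} \<and> card A = k) \<and> card P = l \<and> finite P \<and>
     (\<forall>A\<in>P. \<forall>B\<in>P. A \<noteq> B \<longrightarrow> A \<inter> B = {})"

definition close :: "nat \<Rightarrow> real \<Rightarrow> real \<Rightarrow> nat set set \<Rightarrow> nat set set \<Rightarrow> bool" where
  "close k \<alpha> \<beta> P1 P2 \<longleftrightarrow>
     (\<exists>A1\<in>P1. \<exists>B1\<in>P1. \<exists>A2\<in>P2. \<exists>B2\<in>P2. A1 \<noteq> B1 \<and> A2 \<noteq> B2 \<and>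
        real (card (A1 \<inter> A2)) > \<alpha> * real k \<and> real (card (B1 \<inter> B2)) > \<beta> * real k)"

end

theory Submission
  imports Defs
begin

text \<open>Call parpartitions \<open>P\<^sub>1, P\<^sub>2\<close> compatible if there are no \<open>A\<^sub>1 \<noteq> B\<^sub>1\<close> in \<open>P\<^sub>1\<close> and
  \<open>A\<^sub>2 \<noteq> B\<^sub>2\<close> in \<open>P\<^sub>2\<close> with \<open>|A\<^sub>1 \<inter> A\<^sub>2| + |B\<^sub>1 \<inter> B\<^sub>2| \<ge> k + 3\<close>; since \<open>\<alpha> + \<beta> \<ge> (k + 2) / k\<close>,
  compatible parpartitions are not \<open>(\<alpha>, \<beta>)\<close>-close (and the hypotheses force \<open>k \<ge> 3\<close>).
  The family is built greedily, one \<open>k\<close>-set at a time, maintaining pairwise disjoint and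
  pairwise compatible completed parpartitions together with one partial parpartition \<open>H\<close>.
  Given a set \<open>r\<close> not used so far, choose \<open>X\<close> outside a set of obstructions and add it to
  \<open>H\<close>; if \<open>X\<close> already belongs to a completed parpartition \<open>Q\<close>, then \<open>r\<close> takes its place in
  \<open>Q\<close>. Excluding the sets meeting \<open>H\<close> or \<open>r\<close> costs at most \<open>2m/3\<close> sets because
  \<open>k\<^sup>2 l \<le> n/3\<close>, and excluding the conflicting configurations costs \<open>O(l\<^sup>2 n\<^sup>k\<^sup>-\<^sup>3) = o(m)\<close>,
  so a suitable \<open>X\<close> exists as long as fewer than \<open>m\<close> sets have been used.\<close>

definition k_subsets :: "nat \<Rightarrow> nat \<Rightarrow> nat set set" where
  "k_subsets n k = {A. A \<subseteq> {1..n} \<and> card A = k}"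

lemma finite_k_subsets: "finite (k_subsets n k)"
  unfolding k_subsets_def by (rule finite_subset[of _ "Pow {1..n}"]) auto

lemma card_k_subsets: "card (k_subsets n k) = n choose k"
  unfolding k_subsets_def using n_subsets[of "{1..n}" k] by simp

lemma k_subsetsD:
  assumes "X \<in> k_subsets n k"
  shows "X \<subseteq> {1..n}" "card X = k" "finite X"
  using assms finite_subset[of X "{1..n}"] unfolding k_subsets_def by auto

lemma parpartition_subset_k_subsets: "parpartition n k l P \<Longrightarrow> P \<subseteq> k_subsets n k"
  unfolding parpartition_def k_subsets_def by auto

lemma card_UN_le_const:
  assumes "finite I" "\<And>i. i \<in> I \<Longrightarrow> card (A i) \<le> K"
  shows "card (\<Union>i\<in>I. A i) \<le> card I * K"
proof -
  have "card (\<Union>i\<in>I. A i) \<le> (\<Sum>i\<in>I. card (A i))" by (rule card_UN_le[OF assms(1)])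
  also have "\<dots> \<le> card I * K" using sum_bounded_above[of I "\<lambda>i. card (A i)" K] assms by simp
  finally show ?thesis .
qed

lemma card_k_subsets_meeting_le:
  assumes "Y \<subseteq> {1..n}" "card Y = k" "k > 0"
  shows "card {X \<in> k_subsets n k. X \<inter> Y \<noteq> {}} \<le> k * ((n - 1) choose (k - 1))"
proof -
  have fY: "finite Y" using assms(1) finite_subset by blast
  define W where "W y = {W. W \<subseteq> {1..n} - {y} \<and> card W = k - 1}" for y
  have sub: "{X \<in> k_subsets n k. X \<inter> Y \<noteq> {}} \<subseteq> (\<Union>y\<in>Y. insert y ` W y)"
  proof
    fix X assume "X \<in> {X \<in> k_subsets n k. X \<inter> Y \<noteq> {}}"
    then obtain y where y: "y \<in> X" "y \<in> Y" and X: "X \<in> k_subsets n k" by auto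
    have "X - {y} \<in> W y" using k_subsetsD[OF X] y unfolding W_def by auto
    moreover have "X = insert y (X - {y})" using y by auto
    ultimately show "X \<in> (\<Union>y\<in>Y. insert y ` W y)" using y by blast
  qed
  have card_W: "card (insert y ` W y) \<le> (n - 1) choose (k - 1)" if "y \<in> Y" for y
  proof -
    have "finite (W y)" unfolding W_def by (rule finite_subset[of _ "Pow {1..n}"]) auto
    then have "card (insert y ` W y) \<le> card (W y)" by (rule card_image_le)
    moreover have "card ({1..n} - {y}) = n - 1" using that assms(1) by auto
    ultimately show ?thesis using n_subsets[of "{1..n} - {y}" "k - 1"] unfolding W_def by simp
  qed
  have "card {X \<in> k_subsets n k. X \<inter> Y \<noteq> {}} \<le> card (\<Union>y\<in>Y. insert y ` W y)"
    using fY by (intro card_mono[OF _ sub]) (auto simp: W_def intro: finite_subset[of _ "Pow {1..n}"])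
  also have "\<dots> \<le> card Y * ((n - 1) choose (k - 1))"
    using card_W by (rule card_UN_le_const[OF fY])
  finally show ?thesis using assms(2) by simp
qed

definition overlapping :: "nat \<Rightarrow> nat \<Rightarrow> nat set \<Rightarrow> nat \<Rightarrow> nat set set" where
  "overlapping n k A j = {X \<in> k_subsets n k. j \<le> card (X \<inter> A)}"

lemma finite_overlapping: "finite (overlapping n k A j)"
  unfolding overlapping_def using finite_k_subsets by auto

lemma card_overlapping_le:
  assumes "finite A" "card A = k" "j \<le> k"
  shows "card (overlapping n k A j) \<le> 2 ^ k * n ^ (k - j)"
proof -
  define J where "J = {J. J \<subseteq> A \<and> card J = j}"
  have sub: "overlapping n k A j \<subseteq> (\<Union>J\<in>J. (\<union>) J ` k_subsets n (k - j))"
  proof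
    fix X assume "X \<in> overlapping n k A j"
    then have X: "X \<in> k_subsets n k" and c: "j \<le> card (X \<inter> A)"
      unfolding overlapping_def by auto
    obtain I where I: "I \<subseteq> X \<inter> A" "card I = j" "finite I"
      using obtain_subset_with_card_n[OF c] by metis
    have "X - I \<in> k_subsets n (k - j)"
      using k_subsetsD[OF X] I unfolding k_subsets_def by (auto simp: card_Diff_subset)
    moreover have "X = I \<union> (X - I)" using I by auto
    ultimately show "X \<in> (\<Union>J\<in>J. (\<union>) J ` k_subsets n (k - j))" using I unfolding J_def by blast
  qed
  have fJ: "finite J" unfolding J_def using assms(1) by (auto intro: finite_subset[of _ "Pow A"])
  have "card (overlapping n k A j) \<le> card (\<Union>J\<in>J. (\<union>) J ` k_subsets n (k - j))"
    using fJ finite_k_subsets by (intro card_mono[OF _ sub]) auto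
  also have "\<dots> \<le> card J * (n choose (k - j))"
    using card_image_le[OF finite_k_subsets] by (intro card_UN_le_const[OF fJ]) (simp add: card_k_subsets)
  also have "\<dots> = (k choose j) * (n choose (k - j))"
    using n_subsets[OF assms(1), of j] assms(2) unfolding J_def by simp
  also have "\<dots> \<le> 2 ^ k * n ^ (k - j)"
  proof (rule mult_le_mono)
    show "k choose j \<le> 2 ^ k" by (rule binomial_le_pow2)
    show "n choose (k - j) \<le> n ^ (k - j)"
      by (cases "k - j \<le> n") (auto simp: binomial_le_pow binomial_eq_0)
  qed
  finally show ?thesis .
qed

definition conflict :: "nat \<Rightarrow> nat set \<Rightarrow> nat set \<Rightarrow> nat set \<Rightarrow> nat set \<Rightarrow> bool" where
  "conflict k A1 B1 A2 B2 \<longleftrightarrow> k + 3 \<le> card (A1 \<inter> A2) + card (B1 \<inter> B2)"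

definition compatible :: "nat \<Rightarrow> nat set set \<Rightarrow> nat set set \<Rightarrow> bool" where
  "compatible k P1 P2 \<longleftrightarrow> (\<forall>A1\<in>P1. \<forall>B1\<in>P1. \<forall>A2\<in>P2. \<forall>B2\<in>P2.
     A1 \<noteq> B1 \<longrightarrow> A2 \<noteq> B2 \<longrightarrow> \<not> conflict k A1 B1 A2 B2)"

lemma conflict_commute: "conflict k A1 B1 A2 B2 \<longleftrightarrow> conflict k A2 B2 A1 B1"
  unfolding conflict_def by (simp add: Int_commute)

lemma conflict_swap: "conflict k A1 B1 A2 B2 \<longleftrightarrow> conflict k B1 A1 B2 A2"
  unfolding conflict_def by (simp add: add.commute)

lemma compatible_sym: "compatible k P1 P2 \<Longrightarrow> compatible k P2 P1"
  unfolding compatible_def using conflict_commute by metis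

lemma compatible_subset_left: "compatible k P1 P2 \<Longrightarrow> Q \<subseteq> P1 \<Longrightarrow> compatible k Q P2"
  unfolding compatible_def by blast

lemma compatible_subset_right: "compatible k P1 P2 \<Longrightarrow> Q \<subseteq> P2 \<Longrightarrow> compatible k P1 Q"
  unfolding compatible_def by blast

definition addable :: "nat \<Rightarrow> nat set set set \<Rightarrow> nat set set \<Rightarrow> nat set \<Rightarrow> bool" where
  "addable k F H X \<longleftrightarrow>
     (\<forall>Y\<in>H. disjnt X Y \<and> (\<forall>P\<in>F. \<forall>A\<in>P. \<forall>B\<in>P. \<not> conflict k X Y A B))"

lemma compatible_insert_left:
  assumes "compatible k H P" "addable k F H X" "P \<in> F"
  shows "compatible k (insert X H) P"
  unfolding compatible_def
proof (intro ballI impI)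
  fix A1 B1 A2 B2
  assume mem: "A1 \<in> insert X H" "B1 \<in> insert X H" "A2 \<in> P" "B2 \<in> P" and "A1 \<noteq> B1" "A2 \<noteq> B2"
  then consider "A1 = X" "B1 \<in> H" | "B1 = X" "A1 \<in> H" | "A1 \<in> H" "B1 \<in> H" by auto
  then show "\<not> conflict k A1 B1 A2 B2"
  proof cases
    case 1
    then show ?thesis using assms(2,3) mem unfolding addable_def by blast
  next
    case 2
    then have "\<not> conflict k X A1 B2 A2" using assms(2,3) mem unfolding addable_def by blast
    then show ?thesis using 2 conflict_swap by metis
  next
    case 3
    then show ?thesis using assms(1) mem \<open>A1 \<noteq> B1\<close> \<open>A2 \<noteq> B2\<close> unfolding compatible_def by blast
  qed
qed

text \<open>A new set may be paired freely with members of \<open>Q\<close> that meet every member of \<open>H\<close> in at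
  most two points: the other pair then contributes at most \<open>k\<close> to the overlap.\<close>

lemma compatible_insert_right:
  assumes "compatible k H Q" "finite r" "card r = k"
    and small: "\<forall>Z\<in>Q. \<forall>Y\<in>H. card (Y \<inter> Z) < 3"
  shows "compatible k H (insert r Q)"
  unfolding compatible_def
proof (intro ballI impI)
  fix A1 B1 A2 B2
  assume mem: "A1 \<in> H" "B1 \<in> H" "A2 \<in> insert r Q" "B2 \<in> insert r Q" and "A1 \<noteq> B1" "A2 \<noteq> B2"
  have le_k: "card (C \<inter> r) \<le> k" for C using assms(2,3) card_mono[of r "C \<inter> r"] by simp
  consider "A2 = r" "B2 \<in> Q" | "B2 = r" "A2 \<in> Q" | "A2 \<in> Q" "B2 \<in> Q"
    using mem \<open>A2 \<noteq> B2\<close> by auto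
  then show "\<not> conflict k A1 B1 A2 B2"
  proof cases
    case 1
    then have "card (B1 \<inter> B2) < 3" "card (A1 \<inter> A2) \<le> k" using small mem le_k by auto
    then show ?thesis unfolding conflict_def by linarith
  next
    case 2
    then have "card (A1 \<inter> A2) < 3" "card (B1 \<inter> B2) \<le> k" using small mem le_k by auto
    then show ?thesis unfolding conflict_def by linarith
  next
    case 3
    then show ?thesis using assms(1) mem \<open>A1 \<noteq> B1\<close> \<open>A2 \<noteq> B2\<close> unfolding compatible_def by blast
  qed
qed

definition partners :: "nat set set set \<Rightarrow> nat set \<Rightarrow> nat set set" where
  "partners F Z = \<Union>{P\<in>F. Z \<in> P}"

lemma partnersI: "P \<in> F \<Longrightarrow> Z \<in> P \<Longrightarrow> X \<in> P \<Longrightarrow> X \<in> partners F Z"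
  unfolding partners_def by blast

lemma partners_subset: "\<forall>P\<in>F. P \<subseteq> S \<Longrightarrow> partners F Z \<subseteq> S"
  unfolding partners_def by blast

lemma card_partners_le:
  assumes "pairwise disjnt F" "\<forall>P\<in>F. card P \<le> l"
  shows "card (partners F Z) \<le> l"
proof (cases "\<exists>P\<in>F. Z \<in> P")
  case True
  then obtain P where P: "P \<in> F" "Z \<in> P" by blast
  have "{P\<in>F. Z \<in> P} = {P}"
    using assms(1) P unfolding pairwise_def disjnt_def by blast
  then show ?thesis using assms(2) P unfolding partners_def by simp
next
  case False
  then have "partners F Z = {}" unfolding partners_def by blast
  then show ?thesis by simp
qed

lemma card_UN_partners_le:
  assumes "finite S" "pairwise disjnt F" "\<forall>P\<in>F. card P \<le> l"
  shows "card (\<Union>Z\<in>S. partners F Z) \<le> card S * l"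
  using card_partners_le[OF assms(2,3)] by (rule card_UN_le_const[OF assms(1)])

definition conflicting :: "nat \<Rightarrow> nat \<Rightarrow> nat set set set \<Rightarrow> nat set \<Rightarrow> nat set set" where
  "conflicting n k F Y = {X \<in> k_subsets n k. \<exists>P\<in>F. \<exists>A\<in>P. \<exists>B\<in>P. conflict k X Y A B}"

lemma finite_conflicting: "finite (conflicting n k F Y)"
  unfolding conflicting_def using finite_k_subsets by simp

text \<open>A conflict of \<open>X\<close> with \<open>Y\<close> needs \<open>|Y \<inter> B| = b \<ge> 3\<close> and \<open>|X \<inter> A| \<ge> k + 3 - b\<close>: choose \<open>B\<close>
  among the sets overlapping \<open>Y\<close> in \<open>b\<close> points, \<open>A\<close> among its at most \<open>l\<close> partners, then \<open>X\<close>.\<close>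

lemma conflicting_subset_UN:
  assumes "\<forall>P\<in>F. P \<subseteq> k_subsets n k" "finite Y" "card Y = k"
  shows "conflicting n k F Y
    \<subseteq> (\<Union>b\<in>{3..k}. \<Union>B\<in>overlapping n k Y b. \<Union>A\<in>partners F B. overlapping n k A (k + 3 - b))"
proof
  fix X assume "X \<in> conflicting n k F Y"
  then obtain P A B where X: "X \<in> k_subsets n k" and P: "P \<in> F" "A \<in> P" "B \<in> P"
    and c: "k + 3 \<le> card (X \<inter> A) + card (Y \<inter> B)"
    unfolding conflicting_def conflict_def by blast
  define b where "b = card (Y \<inter> B)"
  have "b \<le> k" unfolding b_def using assms(2,3) card_mono[of Y "Y \<inter> B"] by auto
  moreover have "card (X \<inter> A) \<le> k" using k_subsetsD[OF X] card_mono[of X "X \<inter> A"] by auto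
  ultimately have b: "b \<in> {3..k}" and a: "k + 3 - b \<le> card (X \<inter> A)"
    using c unfolding b_def by auto
  have "B \<in> overlapping n k Y b"
    using assms(1) P unfolding overlapping_def b_def by (auto simp: Int_commute)
  moreover have "X \<in> overlapping n k A (k + 3 - b)"
    using X a unfolding overlapping_def by simp
  moreover have "A \<in> partners F B" using partnersI[OF P(1,3,2)] .
  ultimately show "X \<in> (\<Union>b\<in>{3..k}. \<Union>B\<in>overlapping n k Y b. \<Union>A\<in>partners F B.
      overlapping n k A (k + 3 - b))" using b by blast
qed

lemma card_conflicting_le:
  assumes F: "pairwise disjnt F" "\<forall>P\<in>F. card P \<le> l" "\<forall>P\<in>F. P \<subseteq> k_subsets n k"
    and Y: "finite Y" "card Y = k" and "3 \<le> k"
  shows "card (conflicting n k F Y) \<le> k * 4 ^ k * l * n ^ (k - 3)"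
proof -
  define U where "U b = (\<Union>B\<in>overlapping n k Y b. \<Union>A\<in>partners F B. overlapping n k A (k + 3 - b))"
    for b
  have card_U: "card (U b) \<le> 4 ^ k * l * n ^ (k - 3)" if b: "b \<in> {3..k}" for b
  proof -
    have "card (overlapping n k A (k + 3 - b)) \<le> 2 ^ k * n ^ (b - 3)"
      if "A \<in> partners F B" for A B
    proof -
      have "A \<in> k_subsets n k" using partners_subset[OF F(3)] that by blast
      then have "card (overlapping n k A (k + 3 - b)) \<le> 2 ^ k * n ^ (k - (k + 3 - b))"
        using b k_subsetsD by (intro card_overlapping_le) auto
      also have "k - (k + 3 - b) = b - 3" using b by auto
      finally show ?thesis .
    qed
    then have "card (\<Union>A\<in>partners F B. overlapping n k A (k + 3 - b))
        \<le> card (partners F B) * (2 ^ k * n ^ (b - 3))" for B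
      using finite_subset[OF partners_subset[OF F(3)] finite_k_subsets]
      by (intro card_UN_le_const)
    also have "card (partners F B) * (2 ^ k * n ^ (b - 3)) \<le> l * (2 ^ k * n ^ (b - 3))" for B
      using card_partners_le[OF F(1,2)] by (rule mult_le_mono1)
    finally have "card (U b) \<le> card (overlapping n k Y b) * (l * (2 ^ k * n ^ (b - 3)))"
      unfolding U_def by (intro card_UN_le_const finite_overlapping)
    also have "\<dots> \<le> (2 ^ k * n ^ (k - b)) * (l * (2 ^ k * n ^ (b - 3)))"
      using card_overlapping_le[OF Y] b by (intro mult_le_mono1) simp
    also have "\<dots> = (2 ^ k * 2 ^ k) * l * (n ^ (k - b) * n ^ (b - 3))"
      by (simp only: ac_simps)
    also have "\<dots> = 4 ^ k * l * n ^ (k - 3)"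
    proof -
      have "(2::nat) ^ k * 2 ^ k = 4 ^ k" by (simp add: power_mult_distrib[symmetric])
      moreover have "n ^ (k - b) * n ^ (b - 3) = n ^ (k - 3)" using b by (simp add: power_add[symmetric])
      ultimately show ?thesis by (simp only:)
    qed
    finally show ?thesis .
  qed
  have "U b \<subseteq> k_subsets n k" for b unfolding U_def overlapping_def by blast
  then have "card (conflicting n k F Y) \<le> card (\<Union>b\<in>{3..k}. U b)"
    using conflicting_subset_UN[OF F(3) Y] unfolding U_def[symmetric]
    by (intro card_mono) (blast intro: finite_subset[OF _ finite_k_subsets])+
  also have "\<dots> \<le> card {3..k} * (4 ^ k * l * n ^ (k - 3))"
    using card_U by (intro card_UN_le_const) simp_all
  also have "\<dots> \<le> k * 4 ^ k * l * n ^ (k - 3)"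
    by (simp add: mult.assoc)
  finally show ?thesis .
qed

lemma card_partners_of_overlapping_le:
  assumes "pairwise disjnt F" "\<forall>P\<in>F. card P \<le> l" and Y: "finite Y" "card Y = k" and "3 \<le> k"
  shows "card (\<Union>Z\<in>overlapping n k Y 3. partners F Z) \<le> k * 4 ^ k * l * n ^ (k - 3)"
proof -
  have "card (\<Union>Z\<in>overlapping n k Y 3. partners F Z) \<le> card (overlapping n k Y 3) * l"
    using finite_overlapping assms(1,2) by (rule card_UN_partners_le)
  also have "\<dots> \<le> (2 ^ k * n ^ (k - 3)) * l"
    using card_overlapping_le[OF Y] \<open>3 \<le> k\<close> by (intro mult_le_mono1) simp
  also have "\<dots> \<le> (k * 4 ^ k * n ^ (k - 3)) * l"
  proof (intro mult_le_mono1)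
    have "(2::nat) ^ k \<le> 4 ^ k" by (rule power_mono) auto
    also have "\<dots> \<le> k * 4 ^ k" using \<open>3 \<le> k\<close> by simp
    finally show "2 ^ k \<le> k * 4 ^ k" .
  qed
  finally show ?thesis by (simp add: ac_simps)
qed

text \<open>\<open>F\<close> holds the completed parpartitions, \<open>H\<close> the one under construction.\<close>

definition greedy_state :: "nat \<Rightarrow> nat \<Rightarrow> nat \<Rightarrow> nat set set set \<Rightarrow> nat set set \<Rightarrow> bool" where
  "greedy_state n k l F H \<longleftrightarrow>
     finite F \<and> (\<forall>P\<in>F. parpartition n k l P) \<and> pairwise disjnt F \<and> pairwise (compatible k) F \<and>
     H \<subseteq> k_subsets n k \<and> card H \<le> l \<and> pairwise disjnt H \<and>
     (\<forall>P\<in>F. disjnt P H \<and> compatible k H P)"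

lemma greedy_state_empty: "greedy_state n k l {} {}"
  unfolding greedy_state_def compatible_def by simp

lemma greedy_stateD:
  assumes "greedy_state n k l F H"
  shows "finite F" "\<forall>P\<in>F. parpartition n k l P" "pairwise disjnt F" "pairwise (compatible k) F"
    "H \<subseteq> k_subsets n k" "finite H" "card H \<le> l" "pairwise disjnt H"
    "\<forall>P\<in>F. disjnt P H" "\<forall>P\<in>F. compatible k H P"
  using assms finite_subset[OF _ finite_k_subsets] unfolding greedy_state_def by blast+

lemma greedy_state_complete:
  assumes "greedy_state n k l F H" "card H = l" "l > 0"
  shows "greedy_state n k l (insert H F) {} \<and> card (insert H F) = Suc (card F)"
proof -
  note st = greedy_stateD[OF assms(1)]
  have "H \<noteq> {}" using assms(2,3) by auto
  then have "H \<notin> F" using st(9) unfolding disjnt_def by blast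
  moreover have "parpartition n k l H"
    using st(5,6,8) assms(2) unfolding parpartition_def pairwise_def disjnt_def k_subsets_def
    by blast
  moreover have "pairwise disjnt (insert H F)"
    using st(3,9) unfolding pairwise_insert by (auto simp: disjnt_sym)
  moreover have "pairwise (compatible k) (insert H F)"
    using st(4,10) compatible_sym by (auto simp: pairwise_insert)
  moreover have "compatible k {} P" for P unfolding compatible_def by simp
  ultimately show ?thesis using st(1,2) unfolding greedy_state_def by simp
qed

lemma greedy_state_insert_partial:
  assumes "greedy_state n k l F H" "card H < l" "X \<in> k_subsets n k" "addable k F H X"
  shows "insert X H \<subseteq> k_subsets n k" "card (insert X H) \<le> l" "pairwise disjnt (insert X H)"
    "\<forall>P\<in>F. compatible k (insert X H) P"
proof -
  note st = greedy_stateD[OF assms(1)]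
  show "insert X H \<subseteq> k_subsets n k" using st(5) assms(3) by blast
  show "card (insert X H) \<le> l" using assms(2) st(6) by (simp add: card_insert_if)
  have "\<forall>Y\<in>H. disjnt X Y" using assms(4) unfolding addable_def by blast
  then show "pairwise disjnt (insert X H)"
    using st(8) unfolding pairwise_insert by (simp add: disjnt_sym)
  show "\<forall>P\<in>F. compatible k (insert X H) P"
    using st(10) compatible_insert_left[OF _ assms(4)] by blast
qed

lemma greedy_state_insert:
  assumes "greedy_state n k l F H" "card H < l"
    and X: "X \<in> k_subsets n k" "\<forall>P\<in>F. X \<notin> P" "addable k F H X"
  shows "greedy_state n k l F (insert X H)"
proof -
  note st = greedy_stateD[OF assms(1)]
  have "disjnt P (insert X H)" if "P \<in> F" for P
    using st(9) X(2) that unfolding disjnt_def by blast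
  then show ?thesis using st(1-4) greedy_state_insert_partial[OF assms(1,2) X(1,3)]
    unfolding greedy_state_def by blast
qed

lemma parpartition_exchange:
  assumes Q: "parpartition n k l Q" and X: "X \<in> Q" and r: "r \<in> k_subsets n k" "r \<notin> Q"
    and disj: "\<forall>Z\<in>Q. disjnt Z r"
  shows "parpartition n k l (insert r (Q - {X}))"
proof -
  have fin: "finite Q" and card: "card Q = l" and mem: "\<forall>A\<in>Q. A \<subseteq> {1..n} \<and> card A = k"
    and dis: "\<forall>A\<in>Q. \<forall>B\<in>Q. A \<noteq> B \<longrightarrow> A \<inter> B = {}"
    using Q unfolding parpartition_def by blast+
  have "card (insert r (Q - {X})) = l"
    using fin r(2) card_Suc_Diff1[OF fin X] card by simp
  moreover have "\<forall>A\<in>insert r (Q - {X}). A \<subseteq> {1..n} \<and> card A = k"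
    using mem k_subsetsD(1,2)[OF r(1)] by blast
  moreover have "\<forall>A\<in>insert r (Q - {X}). \<forall>B\<in>insert r (Q - {X}). A \<noteq> B \<longrightarrow> A \<inter> B = {}"
    using dis disj unfolding disjnt_def by blast
  ultimately show ?thesis using fin unfolding parpartition_def by simp
qed

lemma compatible_exchange:
  assumes "compatible k H Q" "X \<in> H" "X \<in> Q" "finite r" "card r = k"
    and disj: "\<forall>A\<in>Q. \<forall>B\<in>Q. A \<noteq> B \<longrightarrow> A \<inter> B = {}"
    and small: "\<forall>Z\<in>Q. \<forall>Y\<in>H - {X}. card (Y \<inter> Z) < 3"
  shows "compatible k H (insert r (Q - {X}))"
proof -
  have "\<forall>Z\<in>Q - {X}. \<forall>Y\<in>H. card (Y \<inter> Z) < 3"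
  proof (intro ballI)
    fix Z Y assume Z: "Z \<in> Q - {X}" and "Y \<in> H"
    show "card (Y \<inter> Z) < 3"
    proof (cases "Y = X")
      case True
      then have "Y \<inter> Z = {}" using disj \<open>X \<in> Q\<close> Z by blast
      then show ?thesis by simp
    qed (use small Z \<open>Y \<in> H\<close> in blast)
  qed
  moreover have "compatible k H (Q - {X})" using assms(1) by (rule compatible_subset_right) blast
  ultimately show ?thesis using compatible_insert_right assms(4,5) by blast
qed

lemma greedy_state_exchange:
  assumes st: "greedy_state n k l F H" and "card H < l"
    and Q: "Q \<in> F" "X \<in> Q" and X: "addable k F H X"
    and r: "r \<in> k_subsets n k" "\<forall>P\<in>F. r \<notin> P" "r \<notin> H" "addable k F Q r"
    and small: "\<forall>Z\<in>Q. \<forall>Y\<in>H. card (Y \<inter> Z) < 3"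
  defines "Q' \<equiv> insert r (Q - {X})"
  shows "greedy_state n k l (insert Q' (F - {Q})) (insert X H)"
proof -
  note st = greedy_stateD[OF st]
  have ppQ: "parpartition n k l Q" using st(2) Q(1) by blast
  have XK: "X \<in> k_subsets n k" using parpartition_subset_k_subsets[OF ppQ] Q(2) by blast
  note XH = greedy_state_insert_partial[OF assms(1,2) XK X]
  have ppQ': "parpartition n k l Q'"
    using parpartition_exchange[OF ppQ Q(2) r(1)] r(2,4) Q(1)
    unfolding Q'_def addable_def by (simp add: disjnt_sym)
  have compat_Q': "compatible k (insert X H) Q'"
    unfolding Q'_def using XH(4) Q ppQ small k_subsetsD(2,3)[OF r(1)]
    by (intro compatible_exchange) (auto simp: parpartition_def)
  have compat_other: "compatible k Q' P" if "P \<in> F - {Q}" for P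
  proof -
    have "compatible k Q P" using st(4) Q(1) that unfolding pairwise_def by blast
    then have "compatible k (insert r Q) P" using compatible_insert_left[OF _ r(4)] that by blast
    then show ?thesis unfolding Q'_def by (rule compatible_subset_left) blast
  qed
  have disj_other: "disjnt Q' P" if "P \<in> F - {Q}" for P
    using st(3) Q(1) that r(2) unfolding Q'_def pairwise_def disjnt_def by blast
  then have "pairwise disjnt (insert Q' (F - {Q}))"
    using pairwise_subset[OF st(3)] unfolding pairwise_insert by (auto simp: disjnt_sym)
  moreover have "pairwise (compatible k) (insert Q' (F - {Q}))"
    using pairwise_subset[OF st(4)] compat_other compatible_sym unfolding pairwise_insert by blast
  moreover have "disjnt Q' (insert X H)"
  proof -
    have "disjnt Q H" using st(9) Q(1) by blast
    moreover have "X \<noteq> r" using r(2) Q by blast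
    ultimately show ?thesis using r(3) unfolding Q'_def disjnt_def by blast
  qed
  moreover have "disjnt P (insert X H)" if "P \<in> F - {Q}" for P
    using st(3,9) Q that unfolding pairwise_def disjnt_def by blast
  ultimately show ?thesis
    using st(1,2) ppQ' XH compat_Q' compat_other unfolding greedy_state_def by blast
qed

text \<open>The sets \<open>X\<close> that cannot be moved into \<open>H\<close>, given a still unused set \<open>r\<close>. The first two
  parts make \<open>X\<close> addable to \<open>H\<close>; the other three ensure that if \<open>X\<close> lies in some \<open>Q \<in> F\<close>,
  then \<open>r\<close> can take its place there.\<close>

definition obstructions :: "nat \<Rightarrow> nat \<Rightarrow> nat set set set \<Rightarrow> nat set set \<Rightarrow> nat set \<Rightarrow> nat set set" where
  "obstructions n k F H r =
     (\<Union>Y\<in>H. {X \<in> k_subsets n k. X \<inter> Y \<noteq> {}}) \<union> (\<Union>Y\<in>H. conflicting n k F Y) \<union>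
     (\<Union>Z\<in>{Z \<in> k_subsets n k. Z \<inter> r \<noteq> {}}. partners F Z) \<union>
     (\<Union>Z\<in>conflicting n k F r. partners F Z) \<union>
     (\<Union>Y\<in>H. \<Union>Z\<in>overlapping n k Y 3. partners F Z)"

lemma card_obstructions_le:
  assumes st: "greedy_state n k l F H" and r: "r \<in> k_subsets n k" and "3 \<le> k"
  shows "card (obstructions n k F H r)
    \<le> 2 * (l * (k * ((n - 1) choose (k - 1)))) + 3 * (l * (k * 4 ^ k * l * n ^ (k - 3)))"
proof -
  note st = greedy_stateD[OF st]
  define M where "M = k * ((n - 1) choose (k - 1))"
  define E where "E = k * 4 ^ k * l * n ^ (k - 3)"
  have F: "pairwise disjnt F" "\<forall>P\<in>F. card P \<le> l" "\<forall>P\<in>F. P \<subseteq> k_subsets n k"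
    using st(2,3) parpartition_subset_k_subsets unfolding parpartition_def by auto
  have HK: "Y \<in> H \<Longrightarrow> Y \<subseteq> {1..n} \<and> card Y = k \<and> finite Y" for Y
    using st(5) k_subsetsD by blast
  have card_meeting: "card {X \<in> k_subsets n k. X \<inter> Y \<noteq> {}} \<le> M"
    if "Y \<subseteq> {1..n}" "card Y = k" for Y
    using card_k_subsets_meeting_le[OF that] \<open>3 \<le> k\<close> unfolding M_def by simp
  have card_conflicting: "card (conflicting n k F Y) \<le> E" if "finite Y" "card Y = k" for Y
    using card_conflicting_le[OF F that \<open>3 \<le> k\<close>] unfolding E_def .
  have card_partners_UN: "card (\<Union>Z\<in>S. partners F Z) \<le> card S * l" if "finite S" for S
    using that F(1,2) by (rule card_UN_partners_le)
  have card_overlap_partners: "card (\<Union>Z\<in>overlapping n k Y 3. partners F Z) \<le> E" if "Y \<in> H" for Y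
    using card_partners_of_overlapping_le[OF F(1,2)] HK[OF that] \<open>3 \<le> k\<close> unfolding E_def by blast
  have "card (obstructions n k F H r) \<le> card H * M + card H * E + M * l + E * l + card H * E"
    unfolding obstructions_def
  proof (intro order.trans[OF card_Un_le] add_mono)
    show "card (\<Union>Y\<in>H. {X \<in> k_subsets n k. X \<inter> Y \<noteq> {}}) \<le> card H * M"
      using card_meeting HK by (intro card_UN_le_const st(6)) blast
    show "card (\<Union>Y\<in>H. conflicting n k F Y) \<le> card H * E"
      using card_conflicting HK by (intro card_UN_le_const st(6)) blast
    have "card (\<Union>Z\<in>{Z \<in> k_subsets n k. Z \<inter> r \<noteq> {}}. partners F Z)
        \<le> card {Z \<in> k_subsets n k. Z \<inter> r \<noteq> {}} * l"
      using finite_k_subsets by (intro card_partners_UN) simp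
    also have "\<dots> \<le> M * l"
      using card_meeting[OF k_subsetsD(1,2)[OF r]] by (rule mult_le_mono1)
    finally show "card (\<Union>Z\<in>{Z \<in> k_subsets n k. Z \<inter> r \<noteq> {}}. partners F Z) \<le> M * l" .
    have "card (\<Union>Z\<in>conflicting n k F r. partners F Z) \<le> card (conflicting n k F r) * l"
      by (rule card_partners_UN[OF finite_conflicting])
    also have "\<dots> \<le> E * l"
      using card_conflicting[OF k_subsetsD(3,2)[OF r]] by (rule mult_le_mono1)
    finally show "card (\<Union>Z\<in>conflicting n k F r. partners F Z) \<le> E * l" .
    show "card (\<Union>Y\<in>H. \<Union>Z\<in>overlapping n k Y 3. partners F Z) \<le> card H * E"
      using card_overlap_partners by (rule card_UN_le_const[OF st(6)])
  qed
  also have "\<dots> \<le> l * M + l * E + l * M + l * E + l * E"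
    using mult_le_mono1[OF st(7), of M] mult_le_mono1[OF st(7), of E]
    by (intro add_mono) (simp_all add: mult.commute)
  also have "\<dots> = 2 * (l * M) + 3 * (l * E)" by simp
  finally show ?thesis unfolding M_def E_def .
qed

lemma addable_if_not_obstructed:
  assumes "X \<in> k_subsets n k" "X \<notin> obstructions n k F H r"
  shows "addable k F H X"
  unfolding addable_def
proof
  fix Y assume "Y \<in> H"
  then have "X \<notin> {X \<in> k_subsets n k. X \<inter> Y \<noteq> {}}" "X \<notin> conflicting n k F Y"
    using assms(2) unfolding obstructions_def by blast+
  then show "disjnt X Y \<and> (\<forall>P\<in>F. \<forall>A\<in>P. \<forall>B\<in>P. \<not> conflict k X Y A B)"
    using assms(1) unfolding disjnt_def conflicting_def by blast
qed

lemma exchangeable_if_not_obstructed: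
  assumes st: "greedy_state n k l F H" and X: "X \<notin> obstructions n k F H r"
    and Q: "Q \<in> F" "X \<in> Q"
  shows "addable k F Q r" "\<forall>Z\<in>Q. \<forall>Y\<in>H. card (Y \<inter> Z) < 3"
proof -
  have QK: "Q \<subseteq> k_subsets n k"
    using greedy_stateD(2)[OF st] Q(1) parpartition_subset_k_subsets by blast
  have X_partner: "X \<in> partners F Z" if "Z \<in> Q" for Z using partnersI[OF Q(1) that Q(2)] .
  have "disjnt r Z" if "Z \<in> Q" for Z
  proof (rule ccontr)
    assume "\<not> disjnt r Z"
    then have "Z \<in> {Z \<in> k_subsets n k. Z \<inter> r \<noteq> {}}" using QK that unfolding disjnt_def by blast
    then have "X \<in> (\<Union>Z\<in>{Z \<in> k_subsets n k. Z \<inter> r \<noteq> {}}. partners F Z)"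
      using X_partner[OF that] by (rule UN_I)
    then show False using X unfolding obstructions_def by (simp only: Un_iff simp_thms)
  qed
  moreover have "\<not> conflict k r Z A B" if "Z \<in> Q" "P \<in> F" "A \<in> P" "B \<in> P" for Z P A B
  proof
    assume "conflict k r Z A B"
    then have "conflict k Z r B A" by (simp add: conflict_swap)
    then have "Z \<in> conflicting n k F r" using that QK unfolding conflicting_def by blast
    then have "X \<in> (\<Union>Z\<in>conflicting n k F r. partners F Z)" using X_partner[OF that(1)] by (rule UN_I)
    then show False using X unfolding obstructions_def by (simp only: Un_iff simp_thms)
  qed
  ultimately show "addable k F Q r" unfolding addable_def by blast
  show "\<forall>Z\<in>Q. \<forall>Y\<in>H. card (Y \<inter> Z) < 3"
  proof (intro ballI, rule ccontr)
    fix Z Y assume Z: "Z \<in> Q" and Y: "Y \<in> H" and "\<not> card (Y \<inter> Z) < 3"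
    then have "Z \<in> overlapping n k Y 3" using QK unfolding overlapping_def by (auto simp: Int_commute)
    then have "X \<in> (\<Union>Z\<in>overlapping n k Y 3. partners F Z)" using X_partner[OF Z] by (rule UN_I)
    then have "X \<in> (\<Union>Y\<in>H. \<Union>Z\<in>overlapping n k Y 3. partners F Z)" using Y by blast
    then show False using X unfolding obstructions_def by (simp only: Un_iff simp_thms)
  qed
qed

lemma exists_unused_k_subset:
  assumes st: "greedy_state n k l F H" and used: "l * card F + card H < n choose k"
  shows "\<exists>r\<in>k_subsets n k. (\<forall>P\<in>F. r \<notin> P) \<and> r \<notin> H"
proof (rule ccontr)
  note st = greedy_stateD[OF st]
  assume "\<not> ?thesis"
  then have sub: "k_subsets n k \<subseteq> \<Union>F \<union> H" by blast
  have "finite (\<Union>F)" using st(1,2) unfolding parpartition_def by blast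
  then have "n choose k \<le> card (\<Union>F \<union> H)"
    using card_mono[OF _ sub] st(6) card_k_subsets by (metis finite_UnI)
  also have "\<dots> \<le> card (\<Union>F) + card H" by (rule card_Un_le)
  also have "card (\<Union>F) \<le> (\<Sum>P\<in>F. card P)" by (rule card_Union_le_sum_card)
  also have "(\<Sum>P\<in>F. card P) = l * card F" using st(2) unfolding parpartition_def by simp
  finally show False using used by simp
qed

lemma obstructions_subset_k_subsets:
  assumes "greedy_state n k l F H"
  shows "obstructions n k F H r \<subseteq> k_subsets n k"
proof -
  have "\<forall>P\<in>F. P \<subseteq> k_subsets n k"
    using greedy_stateD(2)[OF assms] parpartition_subset_k_subsets by blast
  then have "partners F Z \<subseteq> k_subsets n k" for Z by (rule partners_subset)
  moreover have "conflicting n k F Y \<subseteq> k_subsets n k" for Y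
    unfolding conflicting_def by (rule Collect_restrict)
  ultimately show ?thesis unfolding obstructions_def by (intro Un_least UN_least; blast)
qed

lemma greedy_state_extend:
  assumes st: "greedy_state n k l F H" and "card H < l"
    and X: "X \<in> k_subsets n k" "X \<notin> obstructions n k F H r"
    and r: "r \<in> k_subsets n k" "\<forall>P\<in>F. r \<notin> P" "r \<notin> H"
  shows "\<exists>F'. greedy_state n k l F' (insert X H) \<and> card F' = card F"
proof (cases "\<exists>Q\<in>F. X \<in> Q")
  case False
  then show ?thesis
    using greedy_state_insert[OF st \<open>card H < l\<close> X(1)] addable_if_not_obstructed[OF X] by blast
next
  case True
  then obtain Q where Q: "Q \<in> F" "X \<in> Q" by blast
  note exch = exchangeable_if_not_obstructed[OF st X(2) Q]
  define Q' where "Q' = insert r (Q - {X})"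
  have "Q' \<notin> F - {Q}" using r(2) unfolding Q'_def by blast
  then have "card (insert Q' (F - {Q})) = card F"
    using greedy_stateD(1)[OF st] card_Suc_Diff1[OF greedy_stateD(1)[OF st] Q(1)] by simp
  moreover have "greedy_state n k l (insert Q' (F - {Q})) (insert X H)"
    unfolding Q'_def using greedy_state_exchange[OF st \<open>card H < l\<close> Q
      addable_if_not_obstructed[OF X] r exch] .
  ultimately show ?thesis by blast
qed

lemma greedy_state_grow:
  assumes st: "greedy_state n k l F H" and "card H < l" and "3 \<le> k"
    and used: "l * card F + card H < n choose k"
    and budget: "2 * (l * (k * ((n - 1) choose (k - 1)))) + 3 * (l * (k * 4 ^ k * l * n ^ (k - 3)))
      < n choose k"
  shows "\<exists>F' H'. greedy_state n k l F' H' \<and> card H' < l \<and>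
    l * card F' + card H' = Suc (l * card F + card H)"
proof -
  obtain r where r: "r \<in> k_subsets n k" "\<forall>P\<in>F. r \<notin> P" "r \<notin> H"
    using exists_unused_k_subset[OF st used] by blast
  have "card (obstructions n k F H r) < card (k_subsets n k)"
    using card_obstructions_le[OF st r(1) \<open>3 \<le> k\<close>] budget card_k_subsets by simp
  moreover have "finite (obstructions n k F H r)"
    using obstructions_subset_k_subsets[OF st] finite_k_subsets by (rule finite_subset)
  ultimately obtain X where X: "X \<in> k_subsets n k" "X \<notin> obstructions n k F H r"
    by (meson card_mono not_le subsetI)
  obtain F' where st': "greedy_state n k l F' (insert X H)" and "card F' = card F"
    using greedy_state_extend[OF st \<open>card H < l\<close> X r] by blast
  have "X \<notin> H"
    using addable_if_not_obstructed[OF X] k_subsetsD(2)[OF X(1)] \<open>3 \<le> k\<close>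
    unfolding addable_def disjnt_def by force
  then have card_XH: "card (insert X H) = Suc (card H)"
    using greedy_stateD(6)[OF st] by simp
  show ?thesis
  proof (cases "card (insert X H) < l")
    case True
    then show ?thesis using st' card_XH \<open>card F' = card F\<close>
      by (intro exI[of _ F'] exI[of _ "insert X H"]) simp
  next
    case False
    then have "card (insert X H) = l" using card_XH \<open>card H < l\<close> by simp
    then show ?thesis
      using greedy_state_complete[OF st'] card_XH \<open>card F' = card F\<close> \<open>card H < l\<close>
      by (intro exI[of _ "insert (insert X H) F'"] exI[of _ "{}"]) auto
  qed
qed

lemma greedy_state_reaches:
  assumes "0 < l" "3 \<le> k"
    and budget: "2 * (l * (k * ((n - 1) choose (k - 1)))) + 3 * (l * (k * 4 ^ k * l * n ^ (k - 3)))
      < n choose k"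
  shows "t \<le> n choose k \<Longrightarrow> \<exists>F H. greedy_state n k l F H \<and> card H < l \<and> l * card F + card H = t"
proof (induction t)
  case 0
  then show ?case using greedy_state_empty \<open>0 < l\<close> by force
next
  case (Suc t)
  then obtain F H where "greedy_state n k l F H" "card H < l" "l * card F + card H = t" by auto
  then show ?case using greedy_state_grow[OF _ _ \<open>3 \<le> k\<close> _ budget] Suc.prems by auto
qed

lemma meeting_budget:
  assumes "0 < k" "3 * (k * k * l) \<le> n"
  shows "3 * (l * (k * ((n - 1) choose (k - 1)))) \<le> n choose k"
proof -
  have "n * (3 * (l * (k * ((n - 1) choose (k - 1))))) = 3 * k * l * (n * ((n - 1) choose (k - 1)))"
    by (simp only: ac_simps)
  also have "n * ((n - 1) choose (k - 1)) = k * (n choose k)"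
    using times_binomial_minus1_eq[of k n] assms(1) by simp
  also have "3 * k * l * (k * (n choose k)) = 3 * (k * k * l) * (n choose k)"
    by (simp only: ac_simps)
  also have "\<dots> \<le> n * (n choose k)" using assms(2) by (rule mult_le_mono1)
  finally have "n * (3 * (l * (k * ((n - 1) choose (k - 1))))) \<le> n * (n choose k)" .
  moreover have "0 < n \<or> l = 0"
  proof (cases "l = 0")
    case False
    then have "0 < k * k * l" using assms(1) by simp
    then show ?thesis using assms(2) by linarith
  qed simp
  ultimately show ?thesis by auto
qed

lemma pow_le_binomial_mult_pow:
  assumes "k \<le> n"
  shows "n ^ k \<le> (n choose k) * k ^ k"
proof (cases "k = 0")
  case False
  have "(real n / real k) ^ k \<le> real (n choose k)"
    by (rule binomial_ge_n_over_k_pow_k[OF assms])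
  then have "(real n / real k) ^ k * real k ^ k \<le> real (n choose k) * real k ^ k"
    by (intro mult_right_mono) auto
  then have "real (n ^ k) \<le> real ((n choose k) * k ^ k)"
    using False by (simp add: power_divide)
  then show ?thesis by (simp only: of_nat_le_iff)
qed simp

text \<open>Since \<open>l \<le> n\<close>, the conflict count is \<open>O(n\<^sup>k\<^sup>-\<^sup>1)\<close>, while \<open>n choose k \<ge> (n/k)\<^sup>k\<close>.\<close>

lemma conflict_budget:
  assumes "3 \<le> k" "l \<le> n" "9 * (k * 4 ^ k) * k ^ k < n"
  shows "9 * (l * (k * 4 ^ k * l * n ^ (k - 3))) < n choose k"
proof -
  define c where "c = k * 4 ^ k"
  have k_eq: "k - 1 = Suc (Suc (k - 3))" and "k = Suc (k - 1)" using assms(1) by arith+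
  have "l * (c * l * n ^ (k - 3)) = c * (l * l * n ^ (k - 3))" by (simp only: ac_simps)
  also have "\<dots> \<le> c * (n * n * n ^ (k - 3))"
    using assms(2) by (intro mult_le_mono2 mult_le_mono1 mult_le_mono)
  also have "n * n * n ^ (k - 3) = n ^ (k - 1)" unfolding k_eq by (simp add: mult.assoc)
  finally have lhs: "9 * (l * (c * l * n ^ (k - 3))) \<le> 9 * c * n ^ (k - 1)" by simp
  have "0 < n ^ (k - 1)" using assms(3) by simp
  moreover have "k ^ k * (9 * c) < n" using assms(3) unfolding c_def by (simp only: ac_simps)
  ultimately have "k ^ k * (9 * c) * n ^ (k - 1) < n * n ^ (k - 1)" by simp
  then have "k ^ k * (9 * c * n ^ (k - 1)) < n * n ^ (k - 1)" by (simp only: mult.assoc)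
  also have "n * n ^ (k - 1) = n ^ k" using \<open>k = Suc (k - 1)\<close> by (metis power_Suc)
  also have "\<dots> \<le> (n choose k) * k ^ k"
  proof (rule pow_le_binomial_mult_pow)
    have "k \<le> k * 4 ^ k * k ^ k" using assms(1) by simp
    then show "k \<le> n" using assms(3) by linarith
  qed
  finally have "9 * c * n ^ (k - 1) < n choose k" by (simp add: mult.commute)
  then show ?thesis using lhs unfolding c_def by linarith
qed

lemma obstruction_budget:
  assumes "3 \<le> k" "3 * (k * k * l) \<le> n" "9 * (k * 4 ^ k) * k ^ k < n"
  shows "2 * (l * (k * ((n - 1) choose (k - 1)))) + 3 * (l * (k * 4 ^ k * l * n ^ (k - 3)))
    < n choose k"
proof -
  have "l \<le> k * k * l" using assms(1) by simp
  then have "l \<le> n" using assms(2) by linarith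
  then have "9 * (l * (k * 4 ^ k * l * n ^ (k - 3))) < n choose k"
    by (rule conflict_budget[OF assms(1) _ assms(3)])
  moreover have "3 * (l * (k * ((n - 1) choose (k - 1)))) \<le> n choose k"
    using meeting_budget[OF _ assms(2)] assms(1) by simp
  moreover have "3 * x \<le> m \<Longrightarrow> 9 * y < m \<Longrightarrow> 2 * x + 3 * y < m" for x y m :: nat
    by linarith
  ultimately show ?thesis by blast
qed

lemma compatible_not_close:
  assumes "compatible k P1 P2" "real (k + 2) / real k \<le> \<alpha> + \<beta>" "0 < k"
  shows "\<not> close k \<alpha> \<beta> P1 P2"
proof
  assume "close k \<alpha> \<beta> P1 P2"
  then obtain A1 B1 A2 B2 where mem: "A1 \<in> P1" "B1 \<in> P1" "A2 \<in> P2" "B2 \<in> P2" "A1 \<noteq> B1" "A2 \<noteq> B2"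
    and a: "real (card (A1 \<inter> A2)) > \<alpha> * real k" and b: "real (card (B1 \<inter> B2)) > \<beta> * real k"
    unfolding close_def by blast
  have "real (k + 2) \<le> (\<alpha> + \<beta>) * real k"
    using assms(2,3) by (simp add: divide_le_eq)
  then have "k + 3 \<le> card (A1 \<inter> A2) + card (B1 \<inter> B2)"
    using a b by (simp add: algebra_simps)
  then show False using assms(1) mem unfolding compatible_def conflict_def by blast
qed

theorem theorem1p2:
  fixes k :: nat and \<alpha> \<beta> :: real
  assumes "k \<ge> 2" and "0 < \<alpha>" and "\<alpha> < 1" and "0 < \<beta>" and "\<beta> < 1"
    and "\<alpha> + \<beta> \<ge> real (k + 2) / real k"
  shows "\<exists>N. \<forall>n \<ge> N. \<forall>l::nat. l \<ge> 2 \<and> real (k^2 * l) \<le> real n / 3 \<longrightarrow>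
           (\<exists>F :: nat set set set.
              finite F \<and> card F = (n choose k) div l \<and>
              (\<forall>P\<in>F. parpartition n k l P) \<and>
              (\<forall>P1\<in>F. \<forall>P2\<in>F. P1 \<noteq> P2 \<longrightarrow> P1 \<inter> P2 = {}) \<and>
              (\<forall>P1\<in>F. \<forall>P2\<in>F. P1 \<noteq> P2 \<longrightarrow> \<not> close k \<alpha> \<beta> P1 P2))"
proof (intro exI[of _ "9 * (k * 4 ^ k) * k ^ k + 1"] allI impI)
  have "k \<noteq> 2" using assms(3,5,6) by auto
  then have "3 \<le> k" using assms(1) by simp
  fix n l :: nat
  assume n_large: "9 * (k * 4 ^ k) * k ^ k + 1 \<le> n" and l: "2 \<le> l \<and> real (k^2 * l) \<le> real n / 3"
  then have "real (3 * (k * k * l)) \<le> real n" by (simp add: power2_eq_square)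
  then have "3 * (k * k * l) \<le> n" by (simp only: of_nat_le_iff)
  moreover have "9 * (k * 4 ^ k) * k ^ k < n" using n_large by simp
  ultimately have "2 * (l * (k * ((n - 1) choose (k - 1)))) + 3 * (l * (k * 4 ^ k * l * n ^ (k - 3)))
      < n choose k"
    by (rule obstruction_budget[OF \<open>3 \<le> k\<close>])
  then obtain F H where st: "greedy_state n k l F H" and "card H < l"
    and total: "l * card F + card H = l * ((n choose k) div l)"
    using greedy_state_reaches[of l k n "l * ((n choose k) div l)"] \<open>3 \<le> k\<close> l by auto
  have "card H = (l * card F + card H) mod l" using \<open>card H < l\<close> by simp
  also have "\<dots> = 0" using total by simp
  finally have "card H = 0" .
  then have "card F = (n choose k) div l" using total l by simp
  moreover have "\<not> close k \<alpha> \<beta> P1 P2" if "P1 \<in> F" "P2 \<in> F" "P1 \<noteq> P2" for P1 P2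
    using greedy_stateD(4)[OF st] that assms(6) \<open>3 \<le> k\<close>
    unfolding pairwise_def by (intro compatible_not_close) auto
  ultimately show "\<exists>F. finite F \<and> card F = (n choose k) div l \<and> (\<forall>P\<in>F. parpartition n k l P) \<and>
      (\<forall>P1\<in>F. \<forall>P2\<in>F. P1 \<noteq> P2 \<longrightarrow> P1 \<inter> P2 = {}) \<and>
      (\<forall>P1\<in>F. \<forall>P2\<in>F. P1 \<noteq> P2 \<longrightarrow> \<not> close k \<alpha> \<beta> P1 P2)"
    using greedy_stateD(1-3)[OF st] unfolding pairwise_def disjnt_def by blast
qed

end
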